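(* Let $n\ge k\ge 2$ be integers. Then \[ \mathsf{opt}_{\operatorname{bandit}}^{\operatorname{obl}}(n,k)\ge \frac{k-1}{2}\left\lfloor \log_k n\right\rfloor. \]
   Context: Prediction with expert advice in the realizable case: $\mathcal{Y}=\{1,\dots,k\}$, $\mathcal{X}=[k]^n$, experts $h_i(x)=x_i$, $i=1,\dots,n$. $\mathcal{P}_0$ is the set of finite sequences of examples in $\mathcal{X}\times\mathcal{Y}$ consistent with some $h_i$. Bandit feedback against an oblivious adversary: the adversary fixes $S\in\mathcal{P}_0$ in advance; in round $t$ the learner receives the instance $x_t$ of $S$, draws $\hat y_t$ from a distribution depending on past observations and $x_t$, and learns only whether $\hat y_t$ equals the label $y_t$ of $S$. $\mathsf{opt}_{\operatorname{bandit}}^{\operatorname{obl}}(n,k)=\inf_{\text{learner}}\sup_{S\in\mathcal{P}_0}$ expected number of mistakes ($\hat y_t\ne y_t$). *)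

theory Defs
  imports "HOL-Probability.Probability_Mass_Function"
begin

text \<open>Instances are lists of length n with entries in {1..k}; expert i (0-based index
  i < n, corresponding to the paper's h_(i+1)) predicts the i-th coordinate.\<close>

definition instance_ok :: "nat \<Rightarrow> nat \<Rightarrow> nat list \<Rightarrow> bool" where
  "instance_ok n k x \<longleftrightarrow> length x = n \<and> set x \<subseteq> {1..k}"

definition realizable_seq :: "nat \<Rightarrow> nat \<Rightarrow> (nat list \<times> nat) list \<Rightarrow> bool" where
  "realizable_seq n k S \<longleftrightarrow>
     (\<forall>(x, y) \<in> set S. instance_ok n k x \<and> y \<in> {1..k}) \<and>
     (\<exists>i<n. \<forall>(x, y) \<in> set S. y = x ! i)"

text \<open>History of observations: instance, own prediction, bandit feedback (correct or not).\<close>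
type_synonym hist = "(nat list \<times> nat \<times> bool) list"

type_synonym learner = "hist \<Rightarrow> nat list \<Rightarrow> nat pmf"

definition valid_learner :: "nat \<Rightarrow> learner \<Rightarrow> bool" where
  "valid_learner k L \<longleftrightarrow> (\<forall>h x. set_pmf (L h x) \<subseteq> {1..k})"

fun exp_mistakes :: "learner \<Rightarrow> hist \<Rightarrow> (nat list \<times> nat) list \<Rightarrow> ennreal" where
  "exp_mistakes L h [] = 0"
| "exp_mistakes L h ((x, y) # S) =
     (\<integral>\<^sup>+ yh. (if yh = y then 0 else 1) + exp_mistakes L (h @ [(x, yh, yh = y)]) S
        \<partial>measure_pmf (L h x))"

definition opt_bandit_obl :: "nat \<Rightarrow> nat \<Rightarrow> ennreal" where
  "opt_bandit_obl n k =
     (INF L \<in> {L. valid_learner k L}. SUP S \<in> {S. realizable_seq n k S}. exp_mistakes L [] S)"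

end

theory Submission
  imports Defs
begin

text \<open>By averaging (the easy direction of Yao's principle) it suffices to find a finite family of
  realizable sequences on which the mistakes of every learner, summed over the family, are large.
  Let \<open>d = \<lfloor>log\<^sub>k n\<rfloor>\<close> and let instance \<open>x\<^sub>t\<close> (\<open>t < d\<close>) give expert \<open>i\<close> the \<open>t\<close>-th base-\<open>k\<close> digit
  of \<open>i\<close>; then every label sequence \<open>y \<in> [k]\<^sup>d\<close> is realized by the expert whose digits are \<open>y\<close>.
  The adversary shows each \<open>x\<^sub>t\<close> \<open>k - 1\<close> times with label \<open>y\<^sub>t\<close>. Bandit feedback only says whether
  a guess was right, so within a block at most one of the \<open>k\<close> possible labels is hit after \<open>p\<close>
  wrong guesses, for each \<open>p\<close>: summed over the labels a block costs at least
  \<open>0 + 1 + \<dots> + (k - 1) = k (k - 1) / 2\<close> mistakes, that is \<open>(k - 1) / 2\<close> on average, and the \<open>d\<close>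
  blocks add up.\<close>

text \<open>If \<open>c\<close> candidate labels are tried in some order, with \<open>r\<close> attempts, the \<open>p\<close>-th of them
  costs \<open>min p r\<close> mistakes.\<close>

definition guess_cost :: "nat \<Rightarrow> nat \<Rightarrow> nat" where
  "guess_cost c r = (\<Sum>p<c. min p r)"

lemma guess_cost_0 [simp]: "guess_cost c 0 = 0"
  by (simp add: guess_cost_def)

lemma guess_cost_Suc_le: "guess_cost c (Suc r) \<le> c + guess_cost c r"
proof -
  have "guess_cost c (Suc r) \<le> (\<Sum>p<c. Suc (min p r))"
    unfolding guess_cost_def by (intro sum_mono) auto
  then show ?thesis
    by (simp add: sum_Suc guess_cost_def)
qed

lemma guess_cost_Suc_Suc: "guess_cost (Suc c) (Suc r) = c + guess_cost c r"
  by (simp add: guess_cost_def sum.lessThan_Suc_shift sum_Suc del: sum.lessThan_Suc)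

lemma guess_cost_exhaustive: "real (guess_cost k (k - 1)) = real k * (real k - 1) / 2"
proof -
  have "guess_cost k (k - 1) = (\<Sum>p<k. p)"
    unfolding guess_cost_def by (intro sum.cong) auto
  moreover have "2 * (\<Sum>p<k. real p) = real k * (real k - 1)"
    by (induction k) (auto simp: algebra_simps)
  ultimately show ?thesis
    by simp
qed

lemma sum_exp_mistakes_append_ge:
  assumes "\<And>h. c \<le> (\<Sum>i\<in>I. exp_mistakes L h (T i))"
  shows "c \<le> (\<Sum>i\<in>I. exp_mistakes L h (R @ T i))"
proof (induction R arbitrary: h)
  case Nil
  then show ?case
    using assms by simp
next
  case (Cons e R)
  obtain x y where e: "e = (x, y)"
    by fastforce
  let ?F = "\<lambda>z. \<Sum>i\<in>I. (if z = y then 0 else 1) + exp_mistakes L (h @ [(x, z, z = y)]) (R @ T i)"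
  have "c \<le> ?F z" for z
    using Cons.IH[of "h @ [(x, z, z = y)]"] by (rule order.trans) (intro sum_mono, simp)
  then have "c \<le> (\<integral>\<^sup>+z. ?F z \<partial>L h x)"
    by (intro measure_pmf.nn_integral_ge_const AE_I2)
  then show ?case
    by (simp add: e nn_integral_sum)
qed

lemma sum_exp_mistakes_replicate_ge:
  assumes "finite C" and cont: "\<And>h. c \<le> (\<Sum>i\<in>I. exp_mistakes L h (T i))"
  shows "of_nat (card I * guess_cost (card C) r) + of_nat (card C) * c
           \<le> (\<Sum>y\<in>C. \<Sum>i\<in>I. exp_mistakes L h (replicate r (x, y) @ T i))"
  using \<open>finite C\<close>
proof (induction r arbitrary: C h)
  case 0
  have "of_nat (card C) * c = (\<Sum>y\<in>C. c)"
    by simp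
  also have "\<dots> \<le> (\<Sum>y\<in>C. \<Sum>i\<in>I. exp_mistakes L h (T i))"
    by (intro sum_mono cont)
  finally show ?case
    by simp
next
  case (Suc r)
  let ?E = "\<lambda>h y. \<Sum>i\<in>I. exp_mistakes L h (replicate r (x, y) @ T i)"
  let ?lhs = "of_nat (card I * guess_cost (card C) (Suc r)) + of_nat (card C) * c"
  txt \<open>Against a prediction \<open>z\<close>, every label \<open>y \<noteq> z\<close> costs a mistake and leads to the same
    history, so the induction hypothesis applies to \<open>C - {z}\<close>; for \<open>y = z\<close> only the
    continuation \<open>T\<close> is counted.\<close>
  have "?lhs \<le> (\<Sum>y\<in>C. \<Sum>i\<in>I. (if z = y then 0 else 1) +
                  exp_mistakes L (h @ [(x, z, z = y)]) (replicate r (x, y) @ T i))" (is "_ \<le> ?F z") for z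
  proof -
    define C' where "C' = C - {z}"
    define h' where "h' = h @ [(x, z, False)]"
    have IH: "of_nat (card I * guess_cost (card C') r) + of_nat (card C') * c
                \<le> (\<Sum>y\<in>C'. ?E h' y)"
      using Suc by (simp add: C'_def)
    have wrong: "(\<Sum>y\<in>C'. \<Sum>i\<in>I. (if z = y then 0 else 1) +
                  exp_mistakes L (h @ [(x, z, z = y)]) (replicate r (x, y) @ T i))
               = of_nat (card C' * card I) + (\<Sum>y\<in>C'. ?E h' y)"
      by (simp add: C'_def h'_def sum.distrib)
    show ?thesis
    proof (cases "z \<in> C")
      case True
      have right: "c \<le> ?E (h @ [(x, z, True)]) z"
        by (rule sum_exp_mistakes_append_ge[OF cont])
      have "card C = Suc (card C')"
        using True Suc.prems by (metis C'_def card_Suc_Diff1)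
      then have "?lhs = of_nat (card C' * card I)
                       + (of_nat (card I * guess_cost (card C') r) + of_nat (card C') * c) + c"
        by (simp add: guess_cost_Suc_Suc algebra_simps)
      also have "\<dots> \<le> of_nat (card C' * card I) + (\<Sum>y\<in>C'. ?E h' y)
                       + ?E (h @ [(x, z, True)]) z"
        using IH right by (intro add_mono) auto
      also have "\<dots> = ?F z"
        using wrong True Suc.prems by (simp add: C'_def sum.remove add.commute)
      finally show ?thesis .
    next
      case False
      then have "C' = C"
        by (simp add: C'_def)
      have "card I * guess_cost (card C) (Suc r)
          \<le> card C * card I + card I * guess_cost (card C) r"
        using mult_le_mono2[OF guess_cost_Suc_le] by (simp add: algebra_simps)
      then have "?lhs \<le> of_nat (card C * card I)
                       + (of_nat (card I * guess_cost (card C) r) + of_nat (card C) * c)"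
        by (metis add.assoc add_right_mono of_nat_add of_nat_le_iff)
      also have "\<dots> \<le> ?F z"
        using IH wrong \<open>C' = C\<close> by (simp add: add_left_mono)
      finally show ?thesis .
    qed
  qed
  then have "?lhs \<le> (\<integral>\<^sup>+z. ?F z \<partial>L h x)"
    by (intro measure_pmf.nn_integral_ge_const AE_I2)
  then show ?case
    by (simp add: nn_integral_sum)
qed

definition label_seqs :: "nat \<Rightarrow> nat \<Rightarrow> nat list set" where
  "label_seqs k d = {ys. set ys \<subseteq> {1..k} \<and> length ys = d}"

lemma finite_label_seqs: "finite (label_seqs k d)"
  unfolding label_seqs_def by (rule finite_lists_length_eq) simp

lemma card_label_seqs: "card (label_seqs k d) = k ^ d"
  unfolding label_seqs_def by (subst card_lists_length_eq) simp_all

lemma sum_label_seqs_Suc: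
  "(\<Sum>ys\<in>label_seqs k (Suc d). f ys) = (\<Sum>y\<in>{1..k}. \<Sum>ys\<in>label_seqs k d. f (y # ys))"
proof -
  have "label_seqs k (Suc d) = (\<lambda>(ys, y). y # ys) ` (label_seqs k d \<times> {1..k})"
    by (auto simp: label_seqs_def lists_length_Suc_eq)
  moreover have "inj_on (\<lambda>(ys, y). y # ys) (label_seqs k d \<times> {1..k})"
    by (auto simp: inj_on_def)
  ultimately have "(\<Sum>ys\<in>label_seqs k (Suc d). f ys)
      = (\<Sum>ys\<in>label_seqs k d. \<Sum>y\<in>{1..k}. f (y # ys))"
    by (simp add: sum.reindex sum.cartesian_product split_def)
  also have "\<dots> = (\<Sum>y\<in>{1..k}. \<Sum>ys\<in>label_seqs k d. f (y # ys))"
    by (rule sum.swap)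
  finally show ?thesis .
qed

definition repeat_examples :: "nat \<Rightarrow> 'a list \<Rightarrow> 'b list \<Rightarrow> ('a \<times> 'b) list" where
  "repeat_examples r xs ys = concat (map (replicate r) (zip xs ys))"

lemma repeat_examples_Cons [simp]:
  "repeat_examples r (x # xs) (y # ys) = replicate r (x, y) @ repeat_examples r xs ys"
  by (simp add: repeat_examples_def)

lemma set_repeat_examples_subset: "set (repeat_examples r xs ys) \<subseteq> set (zip xs ys)"
  by (auto simp: repeat_examples_def)

lemma sum_exp_mistakes_repeat_examples_ge:
  "of_nat (length xs * k ^ (length xs - 1) * guess_cost k r)
     \<le> (\<Sum>ys\<in>label_seqs k (length xs). exp_mistakes L h (repeat_examples r xs ys))"
proof (induction xs arbitrary: h)
  case Nil
  then show ?case
    by simp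
next
  case (Cons x xs)
  define d where "d = length xs"
  define G where "G = guess_cost k r"
  have "Suc d * k ^ d * G = k ^ d * G + k * (d * k ^ (d - 1) * G)"
    by (cases d) (simp_all add: algebra_simps)
  then have "of_nat (length (x # xs) * k ^ (length (x # xs) - 1) * guess_cost k r)
      = of_nat (card (label_seqs k d) * guess_cost (card {1..k}) r)
        + of_nat (card {1..k}) * of_nat (d * k ^ (d - 1) * G)"
    by (simp add: card_label_seqs d_def G_def)
  also have "\<dots> \<le> (\<Sum>y\<in>{1..k}. \<Sum>ys\<in>label_seqs k d.
                      exp_mistakes L h (replicate r (x, y) @ repeat_examples r xs ys))"
    using Cons.IH by (intro sum_exp_mistakes_replicate_ge) (simp_all add: d_def G_def)
  also have "\<dots> = (\<Sum>ys\<in>label_seqs k (length (x # xs)).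
                      exp_mistakes L h (repeat_examples r (x # xs) ys))"
    by (simp add: sum_label_seqs_Suc d_def)
  finally show ?case .
qed

lemma sum_exp_mistakes_exhaustive_blocks_ge:
  "of_nat (k ^ length xs) * ennreal ((real k - 1) / 2 * real (length xs))
     \<le> (\<Sum>ys\<in>label_seqs k (length xs). exp_mistakes L h (repeat_examples (k - 1) xs ys))"
proof -
  define d where "d = length xs"
  have "real (d * k ^ (d - 1) * guess_cost k (k - 1))
      = real d * real k ^ (d - 1) * (real k * (real k - 1) / 2)"
    by (simp only: of_nat_mult of_nat_power guess_cost_exhaustive)
  also have "\<dots> = real (k ^ d) * ((real k - 1) / 2 * real d)"
    by (cases d) simp_all
  finally have "of_nat (k ^ d) * ennreal ((real k - 1) / 2 * real d)
      = of_nat (d * k ^ (d - 1) * guess_cost k (k - 1))"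
    by (simp only: ennreal_of_nat_eq_real_of_nat ennreal_mult'[OF of_nat_0_le_iff, symmetric])
  also have "\<dots> \<le> (\<Sum>ys\<in>label_seqs k d. exp_mistakes L h (repeat_examples (k - 1) xs ys))"
    unfolding d_def by (rule sum_exp_mistakes_repeat_examples_ge)
  finally show ?thesis
    by (simp add: d_def)
qed

fun digits_value :: "nat \<Rightarrow> nat list \<Rightarrow> nat" where
  "digits_value k [] = 0"
| "digits_value k (y # ys) = (y - 1) + k * digits_value k ys"

lemma digits_value_less:
  assumes "set ys \<subseteq> {1..k}"
  shows "digits_value k ys < k ^ length ys"
  using assms
proof (induction ys)
  case Nil
  then show ?case
    by simp
next
  case (Cons y ys)
  then have "y - 1 < k" and "digits_value k ys + 1 \<le> k ^ length ys"
    by auto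
  then have "(y - 1) + k * digits_value k ys < k * (digits_value k ys + 1)"
    by (simp add: algebra_simps)
  also have "\<dots> \<le> k * k ^ length ys"
    using \<open>digits_value k ys + 1 \<le> k ^ length ys\<close> by (rule mult_le_mono2)
  finally show ?case
    by simp
qed

lemma digit_digits_value:
  assumes "set ys \<subseteq> {1..k}" and "t < length ys"
  shows "digits_value k ys div k ^ t mod k + 1 = ys ! t"
  using assms
proof (induction ys arbitrary: t)
  case Nil
  then show ?case
    by simp
next
  case (Cons y ys)
  then have "y - 1 < k"
    by auto
  then have "digits_value k (y # ys) div k = digits_value k ys"
    and "digits_value k (y # ys) mod k = y - 1"
    by simp_all
  with Cons show ?case
    by (cases t) (auto simp: div_mult2_eq)
qed

definition digit_instance :: "nat \<Rightarrow> nat \<Rightarrow> nat \<Rightarrow> nat list" where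
  "digit_instance n k t = map (\<lambda>i. i div k ^ t mod k + 1) [0..<n]"

lemma realizable_repeat_digit_instances:
  assumes "0 < k" and "k ^ d \<le> n" and "ys \<in> label_seqs k d"
  shows "realizable_seq n k (repeat_examples r (map (digit_instance n k) [0..<d]) ys)"
proof -
  let ?S = "repeat_examples r (map (digit_instance n k) [0..<d]) ys"
  have ys: "set ys \<subseteq> {1..k}" "length ys = d"
    using assms(3) by (auto simp: label_seqs_def)
  have example: "\<exists>t<d. x = digit_instance n k t \<and> y = ys ! t" if "(x, y) \<in> set ?S" for x y
    using set_repeat_examples_subset[THEN subsetD, OF that] ys(2) by (auto simp: set_zip)
  define i where "i = digits_value k ys"
  have "i < n"
    using digits_value_less[OF ys(1)] ys(2) assms(2) by (simp add: i_def)
  have ok: "instance_ok n k (digit_instance n k t)" for t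
    using assms(1) by (auto simp: instance_ok_def digit_instance_def Suc_le_eq)
  have label: "ys ! t \<in> {1..k}" if "t < d" for t
    using that ys nth_mem by blast
  have consistent: "digit_instance n k t ! i = ys ! t" if "t < d" for t
    using that ys \<open>i < n\<close> digit_digits_value[OF ys(1)]
    by (simp add: digit_instance_def i_def)
  have "instance_ok n k x \<and> y \<in> {1..k} \<and> y = x ! i" if "(x, y) \<in> set ?S" for x y
    using example[OF that] ok label consistent by metis
  then show ?thesis
    unfolding realizable_seq_def using \<open>i < n\<close> by blast
qed

lemma opt_bandit_obl_ge_average:
  assumes "finite A" and "A \<noteq> {}" and "\<And>a. a \<in> A \<Longrightarrow> realizable_seq n k (S a)"
    and "\<And>L. of_nat (card A) * c \<le> (\<Sum>a\<in>A. exp_mistakes L [] (S a))"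
  shows "c \<le> opt_bandit_obl n k"
  unfolding opt_bandit_obl_def
proof (rule INF_greatest)
  fix L
  let ?M = "SUP S\<in>{S. realizable_seq n k S}. exp_mistakes L [] S"
  have "of_nat (card A) * c \<le> (\<Sum>a\<in>A. ?M)"
    using assms(4)[of L] by (rule order.trans) (intro sum_mono SUP_upper assms(3) CollectI)
  then have "of_nat (card A) * c \<le> of_nat (card A) * ?M"
    by simp
  moreover have "(of_nat (card A) :: ennreal) \<noteq> 0"
    using assms(1,2) by simp
  ultimately show "c \<le> ?M"
    by (simp add: ennreal_mult_le_mult_iff)
qed

theorem lemma4p10:
  fixes n k :: nat
  assumes "2 \<le> k" and "k \<le> n"
  shows "ennreal ((real k - 1) / 2 * real_of_int \<lfloor>log (real k) (real n)\<rfloor>) \<le> opt_bandit_obl n k"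
proof -
  define d where "d = nat \<lfloor>log (real k) (real n)\<rfloor>"
  have floor_eq: "\<lfloor>log (real k) (real n)\<rfloor> = int d"
    using assms by (simp add: d_def)
  then have "k ^ d \<le> n"
    using assms by (simp add: floor_log_nat_eq_powr_iff)
  let ?S = "repeat_examples (k - 1) (map (digit_instance n k) [0..<d])"
  have "ennreal ((real k - 1) / 2 * real d) \<le> opt_bandit_obl n k"
  proof (rule opt_bandit_obl_ge_average[of "label_seqs k d" _ _ ?S])
    show "finite (label_seqs k d)"
      by (rule finite_label_seqs)
    show "label_seqs k d \<noteq> {}"
      using card_label_seqs[of k d] assms by force
    show "realizable_seq n k (?S ys)" if "ys \<in> label_seqs k d" for ys
      using realizable_repeat_digit_instances that \<open>k ^ d \<le> n\<close> assms by simp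
    show "of_nat (card (label_seqs k d)) * ennreal ((real k - 1) / 2 * real d)
        \<le> (\<Sum>ys\<in>label_seqs k d. exp_mistakes L [] (?S ys))" for L
      using sum_exp_mistakes_exhaustive_blocks_ge[of k "map (digit_instance n k) [0..<d]"]
      by (simp add: card_label_seqs)
  qed
  then show ?thesis
    using floor_eq by simp
qed

end
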